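(* Let $0<\tau<1$, $q>0$, and define for $x>0$ $$f(x)=\frac{\big(x^2(1-\tau)-qx+1\big)^2}{x^3},\qquad x_2=\frac{q+\sqrt{q^2-4(1-\tau)}}{2(1-\tau)}.$$ Let $\varepsilon,\varepsilon'>0$ satisfy $1+\varepsilon<1/\varepsilon'$. (i) If $q>2-\tau$ and $x_2<1+\varepsilon$, then $$\inf_{1+\varepsilon<x<1/\varepsilon'}f(x)=f(1+\varepsilon)=\frac{\big((1+\varepsilon)^2(1-\tau)-q(1+\varepsilon)+1\big)^2}{(1+\varepsilon)^3}.$$ (ii) If $q>2+\tau$ and $1/\varepsilon'<x_2$, then $$\inf_{1+\varepsilon<x<1/\varepsilon'}f(x)=f(1/\varepsilon')=\frac{1}{\varepsilon'}\big((1-\tau)-q\varepsilon'+(\varepsilon')^2\big)^2.$$ *)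

theory Defs
  imports Complex_Main
begin

definition fLem :: "real \<Rightarrow> real \<Rightarrow> real \<Rightarrow> real" where
  "fLem \<tau> q x = (x^2 * (1 - \<tau>) - q * x + 1)^2 / x^3"

definition x2Lem :: "real \<Rightarrow> real \<Rightarrow> real" where
  "x2Lem \<tau> q = (q + sqrt (q^2 - 4 * (1 - \<tau>))) / (2 * (1 - \<tau>))"

end

theory Submission
  imports Defs "HOL-Analysis.Analysis"
begin

text \<open>Write \<open>g x = x\<^sup>2 (1 - \<tau>) - q x + 1\<close>, so that \<open>f = g\<^sup>2 / x\<^sup>3\<close> and
  \<open>f' = g h / x\<^sup>4\<close> with \<open>h x = (1 - \<tau>) x\<^sup>2 + q x - 3 = g x + 2 (q x - 2)\<close>.
  The roots of \<open>g\<close> are real once \<open>q > 2 - \<tau>\<close>, and \<open>x\<^sub>2\<close> is the larger one.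
  Beyond \<open>x\<^sub>2\<close> both \<open>g\<close> and \<open>h\<close> are positive, so \<open>f\<close> increases there.
  Since \<open>g 1 = 2 - \<tau> - q < 0\<close>, the point \<open>1\<close> lies between the roots, so \<open>g < 0 < h\<close>
  on \<open>(1, x\<^sub>2)\<close> when \<open>q > 2 + \<tau>\<close>, and \<open>f\<close> decreases there. In both cases the
  infimum over the open interval is the limit at the appropriate endpoint.\<close>

definition x1Lem :: "real \<Rightarrow> real \<Rightarrow> real" where
  "x1Lem \<tau> q = (q - sqrt (q^2 - 4 * (1 - \<tau>))) / (2 * (1 - \<tau>))"

lemma quadratic_eq_factored:
  fixes a b c x :: real
  assumes "a \<noteq> 0" and "0 \<le> b^2 - 4 * a * c"
  shows "a * x^2 + b * x + c =
    a * (x - (- b - sqrt (b^2 - 4 * a * c)) / (2 * a)) * (x - (- b + sqrt (b^2 - 4 * a * c)) / (2 * a))"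
proof -
  define s where "s = sqrt (b^2 - 4 * a * c)"
  have "s * s = b^2 - 4 * a * c"
    using assms(2) by (simp add: s_def flip: power2_eq_square)
  then show ?thesis
    using assms(1) unfolding s_def[symmetric]
    by (simp add: field_simps power2_eq_square) (metis distrib_left)
qed

lemma fLem_numerator_eq_factored:
  fixes \<tau> q x :: real
  assumes "\<tau> \<noteq> 1" and "4 * (1 - \<tau>) \<le> q^2"
  shows "x^2 * (1 - \<tau>) - q * x + 1 = (1 - \<tau>) * (x - x1Lem \<tau> q) * (x - x2Lem \<tau> q)"
  using quadratic_eq_factored[of "1 - \<tau>" "- q" 1 x] assms
  by (simp add: x1Lem_def x2Lem_def algebra_simps)

lemma fLem_discriminant_pos:
  fixes \<tau> q :: real
  assumes "\<tau> < 1" and "2 - \<tau> < q"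
  shows "4 * (1 - \<tau>) < q^2"
proof -
  have "(2 - \<tau>)^2 < q^2"
    using assms by (intro power_strict_mono) auto
  moreover have "(2 - \<tau>)^2 - 4 * (1 - \<tau>) = \<tau>^2"
    by (simp add: power2_eq_square algebra_simps)
  ultimately show ?thesis
    using zero_le_power2[of \<tau>] by linarith
qed

lemma x1Lem_less_x2Lem:
  fixes \<tau> q :: real
  assumes "\<tau> < 1" and "4 * (1 - \<tau>) < q^2"
  shows "x1Lem \<tau> q < x2Lem \<tau> q"
  using assms by (simp add: x1Lem_def x2Lem_def divide_strict_right_mono)

lemma fLem_has_real_derivative:
  fixes \<tau> q x :: real
  assumes "0 < x"
  shows "(fLem \<tau> q has_real_derivative
    (x^2 * (1 - \<tau>) - q * x + 1) * ((1 - \<tau>) * x^2 + q * x - 3) / x^4) (at x)"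
proof -
  have "(fLem \<tau> q has_real_derivative
      (2 * (x^2 * (1 - \<tau>) - q * x + 1) * (2 * x * (1 - \<tau>) - q) * x^3
        - (x^2 * (1 - \<tau>) - q * x + 1)^2 * (3 * x^2)) / (x^3 * x^3)) (at x)"
    unfolding fLem_def[abs_def] using assms
    by (auto intro!: derivative_eq_intros simp: power2_eq_square power3_eq_cube)
  moreover have "(2 * (x^2 * (1 - \<tau>) - q * x + 1) * (2 * x * (1 - \<tau>) - q) * x^3
        - (x^2 * (1 - \<tau>) - q * x + 1)^2 * (3 * x^2)) / (x^3 * x^3)
      = (x^2 * (1 - \<tau>) - q * x + 1) * ((1 - \<tau>) * x^2 + q * x - 3) / x^4"
    using assms by (simp add: field_simps power2_eq_square power3_eq_cube power4_eq_xxxx)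
  ultimately show ?thesis
    by simp
qed

lemma continuous_on_fLem: "continuous_on {0<..} (fLem \<tau> q)"
  unfolding fLem_def[abs_def] by (intro continuous_intros) auto

lemma fLem_inverse:
  fixes \<tau> q e :: real
  assumes "e \<noteq> 0"
  shows "fLem \<tau> q (1 / e) = (1 / e) * ((1 - \<tau>) - q * e + e^2)^2"
  using assms by (simp add: fLem_def field_simps power2_eq_square power3_eq_cube)

lemma fLem_derivative_pos:
  fixes \<tau> q x :: real
  assumes "\<tau> < 1" and "2 - \<tau> < q" and "x2Lem \<tau> q < x"
  shows "0 < (x^2 * (1 - \<tau>) - q * x + 1) * ((1 - \<tau>) * x^2 + q * x - 3) / x^4"
proof -
  have q: "0 < q"
    using assms(1,2) by simp
  have disc: "4 * (1 - \<tau>) < q^2"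
    using assms(1,2) by (rule fLem_discriminant_pos)
  have g_pos: "0 < x^2 * (1 - \<tau>) - q * x + 1"
    using fLem_numerator_eq_factored[of \<tau> q x] x1Lem_less_x2Lem[OF assms(1) disc] assms(1,3) disc
    by simp
  have "2 < q * q / (2 * (1 - \<tau>))"
    using disc assms(1) by (simp add: field_simps power2_eq_square)
  also have "\<dots> \<le> q * (q + sqrt (q^2 - 4 * (1 - \<tau>))) / (2 * (1 - \<tau>))"
    using q assms(1) disc by (intro divide_right_mono mult_left_mono) auto
  also have "\<dots> = q * x2Lem \<tau> q"
    by (simp add: x2Lem_def)
  also have "\<dots> < q * x"
    using q assms(3) by simp
  finally have qx: "2 < q * x" .
  have h_eq: "(1 - \<tau>) * x^2 + q * x - 3 = (x^2 * (1 - \<tau>) - q * x + 1) + 2 * (q * x - 2)"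
    by (simp add: algebra_simps)
  have h_pos: "0 < (1 - \<tau>) * x^2 + q * x - 3"
    unfolding h_eq by (rule add_pos_pos[OF g_pos]) (use qx in simp)
  have "0 < x"
    using zero_less_mult_pos[of q x] qx q by simp
  with g_pos h_pos show ?thesis
    by simp
qed

lemma fLem_derivative_neg:
  fixes \<tau> q x :: real
  assumes "0 \<le> \<tau>" and "\<tau> < 1" and "2 + \<tau> < q" and "1 < x" and "x < x2Lem \<tau> q"
  shows "(x^2 * (1 - \<tau>) - q * x + 1) * ((1 - \<tau>) * x^2 + q * x - 3) / x^4 < 0"
proof -
  have q: "2 - \<tau> < q"
    using assms(1,3) by simp
  have disc: "4 * (1 - \<tau>) < q^2"
    using assms(2) q by (rule fLem_discriminant_pos)
  note factored = fLem_numerator_eq_factored[OF _ less_imp_le[OF disc]]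
  have "(1 - \<tau>) * (1 - x1Lem \<tau> q) * (1 - x2Lem \<tau> q) < 0"
    using factored[of 1] assms(2) q by simp
  then have "x1Lem \<tau> q < 1"
    using assms(2,4,5) by (simp add: mult_less_0_iff zero_less_mult_iff)
  then have g_neg: "x^2 * (1 - \<tau>) - q * x + 1 < 0"
    using factored[of x] assms(2,4,5) by (simp add: mult_less_0_iff)
  have "1 - \<tau> \<le> (1 - \<tau>) * x^2" and "q < q * x"
    using assms by (simp_all add: one_le_power)
  then have h_pos: "0 < (1 - \<tau>) * x^2 + q * x - 3"
    using assms(3) by linarith
  from g_neg h_pos assms(4) show ?thesis
    by (simp add: divide_neg_pos mult_neg_pos)
qed

lemma x2Lem_pos:
  fixes \<tau> q :: real
  assumes "\<tau> < 1" and "0 < q" and "4 * (1 - \<tau>) \<le> q^2"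
  shows "0 < x2Lem \<tau> q"
  using assms by (simp add: x2Lem_def add_pos_nonneg)

lemma fLem_strict_mono_on:
  fixes \<tau> q :: real
  assumes "\<tau> < 1" and "2 - \<tau> < q"
  shows "strict_mono_on {x2Lem \<tau> q..} (fLem \<tau> q)"
proof (rule strict_mono_onI)
  have x2_pos: "0 < x2Lem \<tau> q"
    using assms fLem_discriminant_pos[OF assms] by (intro x2Lem_pos) auto
  fix y z
  assume "y \<in> {x2Lem \<tau> q..}" and "z \<in> {x2Lem \<tau> q..}" and "y < z"
  then have y: "x2Lem \<tau> q \<le> y"
    by simp
  show "fLem \<tau> q y < fLem \<tau> q z"
  proof (rule DERIV_pos_imp_increasing_open[OF \<open>y < z\<close>])
    fix x
    assume "y < x" "x < z"
    with y x2_pos have "0 < x" and "x2Lem \<tau> q < x"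
      by simp_all
    then show "\<exists>d. DERIV (fLem \<tau> q) x :> d \<and> 0 < d"
      using fLem_has_real_derivative fLem_derivative_pos[OF assms] by blast
  next
    show "continuous_on {y..z} (fLem \<tau> q)"
      using y x2_pos by (intro continuous_on_subset[OF continuous_on_fLem]) auto
  qed
qed

lemma fLem_strict_antimono_on:
  fixes \<tau> q :: real
  assumes "0 \<le> \<tau>" and "\<tau> < 1" and "2 + \<tau> < q"
  shows "strict_antimono_on {1..x2Lem \<tau> q} (fLem \<tau> q)"
proof (rule monotone_onI)
  fix y z
  assume "y \<in> {1..x2Lem \<tau> q}" and "z \<in> {1..x2Lem \<tau> q}" and "y < z"
  then have y: "1 \<le> y" and z: "z \<le> x2Lem \<tau> q"
    by simp_all
  show "fLem \<tau> q z < fLem \<tau> q y"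
  proof (rule DERIV_neg_imp_decreasing_open[OF \<open>y < z\<close>])
    fix x
    assume "y < x" "x < z"
    with y z have "0 < x" and "1 < x" and "x < x2Lem \<tau> q"
      by simp_all
    then show "\<exists>d. DERIV (fLem \<tau> q) x :> d \<and> d < 0"
      using fLem_has_real_derivative fLem_derivative_neg[OF assms] by blast
  next
    show "continuous_on {y..z} (fLem \<tau> q)"
      using y by (intro continuous_on_subset[OF continuous_on_fLem]) auto
  qed
qed

lemma cInf_image_eq_closure_minimum:
  fixes f :: "'a::topological_space \<Rightarrow> real"
  assumes "continuous_on (closure S) f" and "m \<in> closure S" and "\<And>x. x \<in> S \<Longrightarrow> f m \<le> f x"
  shows "Inf (f ` S) = f m"
proof (rule antisym)
  have "S \<noteq> {}"
    using assms(2) by auto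
  then show "f m \<le> Inf (f ` S)"
    using assms(3) by (intro cInf_greatest) auto
  have "bdd_below (f ` S)"
    using assms(3) by (rule bdd_belowI2)
  then have "f ` S \<subseteq> {Inf (f ` S)..}"
    by (auto intro: cInf_lower)
  then have "f ` closure S \<subseteq> {Inf (f ` S)..}"
    using assms(1) by (intro image_closure_subset) auto
  then show "Inf (f ` S) \<le> f m"
    using assms(2) by auto
qed

theorem lemma4p2:
  fixes \<tau> q \<epsilon> \<epsilon>' :: real
  assumes "0 < \<tau>" "\<tau> < 1" "q > 0" "\<epsilon> > 0" "\<epsilon>' > 0" "1 + \<epsilon> < 1 / \<epsilon>'"
  shows "(q > 2 - \<tau> \<and> x2Lem \<tau> q < 1 + \<epsilon> \<longrightarrow>
            Inf (fLem \<tau> q ` {1 + \<epsilon> <..< 1 / \<epsilon>'}) = fLem \<tau> q (1 + \<epsilon>)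
          \<and> fLem \<tau> q (1 + \<epsilon>) =
              ((1 + \<epsilon>)^2 * (1 - \<tau>) - q * (1 + \<epsilon>) + 1)^2 / (1 + \<epsilon>)^3)
       \<and> (q > 2 + \<tau> \<and> 1 / \<epsilon>' < x2Lem \<tau> q \<longrightarrow>
            Inf (fLem \<tau> q ` {1 + \<epsilon> <..< 1 / \<epsilon>'}) = fLem \<tau> q (1 / \<epsilon>')
          \<and> fLem \<tau> q (1 / \<epsilon>') = (1 / \<epsilon>') * ((1 - \<tau>) - q * \<epsilon>' + \<epsilon>'^2)^2)"
proof -
  let ?S = "{1 + \<epsilon> <..< 1 / \<epsilon>'}"
  have closure_S: "closure ?S = {1 + \<epsilon> .. 1 / \<epsilon>'}"
    using assms(6) by simp
  have cont: "continuous_on (closure ?S) (fLem \<tau> q)"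
    unfolding closure_S using assms(4) by (intro continuous_on_subset[OF continuous_on_fLem]) auto
  have left: "Inf (fLem \<tau> q ` ?S) = fLem \<tau> q (1 + \<epsilon>)"
    if "2 - \<tau> < q" and "x2Lem \<tau> q < 1 + \<epsilon>"
  proof (rule cInf_image_eq_closure_minimum[OF cont])
    show "1 + \<epsilon> \<in> closure ?S"
      using assms(6) closure_S by simp
    show "fLem \<tau> q (1 + \<epsilon>) \<le> fLem \<tau> q x" if "x \<in> ?S" for x
      using strict_mono_onD[OF fLem_strict_mono_on[OF assms(2) \<open>2 - \<tau> < q\<close>]] that
        \<open>x2Lem \<tau> q < 1 + \<epsilon>\<close> by (simp add: less_imp_le)
  qed
  have right: "Inf (fLem \<tau> q ` ?S) = fLem \<tau> q (1 / \<epsilon>')"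
    if "2 + \<tau> < q" and "1 / \<epsilon>' < x2Lem \<tau> q"
  proof (rule cInf_image_eq_closure_minimum[OF cont])
    show "1 / \<epsilon>' \<in> closure ?S"
      using assms(6) closure_S by simp
    show "fLem \<tau> q (1 / \<epsilon>') \<le> fLem \<tau> q x" if "x \<in> ?S" for x
      using monotone_onD[OF fLem_strict_antimono_on[OF _ assms(2) \<open>2 + \<tau> < q\<close>]] that assms(1,4)
        \<open>1 / \<epsilon>' < x2Lem \<tau> q\<close> by (simp add: less_imp_le)
  qed
  show ?thesis
    using left right fLem_inverse[of \<epsilon>' \<tau> q] assms(5) by (simp add: fLem_def)
qed

end
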